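(* Let $\alpha:X\to\mathbb PLX$ be measurable, let $t_a(x)\in\mathbb DX$ be $t_a(x)(S)=\alpha(x)(\{a\}\times S)$, and let $[\![-]\!]:\mathbb DX\to\mathbb DA^\infty$ be the unique $F$-coalgebra morphism from $\tilde\alpha^\#$ to $\Pi$ (with $\tilde\alpha^\#$ as below). Let $\mathbf{tr}:X\to\mathbb PA^\infty$ be any map such that for all $x\in X$, $a\in A$, $w\in A^*$: $$\mathbf{tr}(x)(A^\infty)=\alpha(x)(LX),\quad \mathbf{tr}(x)(\{\varepsilon\})=\alpha(x)(1),$$ $$\mathbf{tr}(x)(awA^\infty)=\int_X\mathbf{tr}(-)(wA^\infty)\,dt_a(x),\quad \mathbf{tr}(x)(\{aw\})=\int_X\mathbf{tr}(-)(\{w\})\,dt_a(x).$$ Then $[\![\eta_X(x)]\!]=\mathbf{tr}(x)$ for every $x\in X$, i.e. $\iota_{A^\infty}\circ\mathbf{tr}=[\![-]\!]\circ\eta_X$.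
   Context: Work in $\mathbf{Meas}$. $\mathbb I=[0,1]$; $A$ finite alphabet; $1=\{*\}$; $LX=A\times X+1$ with $\sigma$-algebra $(\mathcal P(A)\otimes\Sigma_X)\oplus\mathcal P(1)$. $\mathbb DX$ (resp. $\mathbb PX$) is the set of sub-probability (resp. probability) measures on $X$ with the $\sigma$-algebra generated by $m\mapsto m(S)$; $\iota_X:\mathbb PX\to\mathbb DX$ is the inclusion; $\eta_X(x)$ is the Dirac measure at $x$. $A^\infty=A^*\cup A^\omega$ with $\sigma$-algebra generated by $\{\emptyset\}\cup\{\{w\}\mid w\in A^*\}\cup\{wA^\infty\mid w\in A^*\}$. $F$ is the functor $FX=\mathbb I\times\mathbb I\times X^A$, $Ff=\mathrm{id}\times\mathrm{id}\times f^A$. $\Pi(m)=\langle m(A^\infty),m(\{\varepsilon\}),a\mapsto m_a\rangle$ with $m_a(S)=m(aS)$. The determinized coalgebra $\tilde\alpha^\#=\langle\tilde\alpha^\#_1,\tilde\alpha^\#_*,a\mapsto\tau_a\rangle:\mathbb DX\to F\mathbb DX$ is $\tilde\alpha^\#_1(m)=\int_X\alpha(-)(LX)\,dm$, $\tilde\alpha^\#_*(m)=\int_X\alpha(-)(1)\,dm$, $\tau_a(m)(S)=\int_X\alpha(-)(\{a\}\times S)\,dm$; it satisfies $\tilde\alpha^\#_1=\tilde\alpha^\#_*+\sum_a\tilde\alpha^\#_1\circ\tau_a$, which guarantees existence and uniqueness of a measurable $[\![-]\!]$ with $\Pi\circ[\![-]\!]=F[\![-]\!]\circ\tilde\alpha^\#$.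 *)

theory Defs
  imports "HOL-Probability.Probability"
begin

text \<open>Elements of LX are Inl (a, x) (for a in A, x in X) or Inr () (the point of 1).
  The sigma-algebra is the coproduct sigma-algebra (P(A) (x) Sigma_X) (+) P(1).\<close>

definition L_space :: "'x measure \<Rightarrow> ('a \<times> 'x + unit) set" where
  "L_space M = Inl ` (UNIV \<times> space M) \<union> {Inr ()}"

definition L :: "'x measure \<Rightarrow> ('a \<times> 'x + unit) measure" where
  "L M = sigma (L_space M)
     ({Inl ` S \<union> T | S T. S \<in> sets (count_space (UNIV :: 'a set) \<Otimes>\<^sub>M M) \<and> T \<subseteq> {Inr ()}})"

text \<open>Inl w is the finite word w, Inr f the infinite word f 0, f 1, ...\<close>

type_synonym 'a word = "'a list + (nat \<Rightarrow> 'a)"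

definition eps :: "'a word" where
  "eps = Inl []"

definition wcons :: "'a \<Rightarrow> 'a word \<Rightarrow> 'a word" where
  "wcons a u = (case u of Inl w \<Rightarrow> Inl (a # w) | Inr f \<Rightarrow> Inr (case_nat a f))"

definition cyl :: "'a list \<Rightarrow> 'a word set" where
  "cyl w = {Inl v | v. \<exists>z. v = w @ z} \<union> {Inr f | f. map f [0..<length w] = w}"

definition Ainf :: "'a word measure" where
  "Ainf = sigma UNIV ({{}} \<union> {{Inl w} | w. True} \<union> {cyl w | w. True})"

definition Fmap :: "('b \<Rightarrow> 'c) \<Rightarrow> real \<times> real \<times> ('a \<Rightarrow> 'b) \<Rightarrow> real \<times> real \<times> ('a \<Rightarrow> 'c)" where
  "Fmap f = (\<lambda>(p, q, g). (p, q, f \<circ> g))"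

definition derivm :: "'a \<Rightarrow> 'a word measure \<Rightarrow> 'a word measure" where
  "derivm a m = measure_of (space Ainf) (sets Ainf) (\<lambda>S. emeasure m (wcons a ` S))"

definition Pi_coalg :: "'a word measure \<Rightarrow> real \<times> real \<times> ('a \<Rightarrow> 'a word measure)" where
  "Pi_coalg m = (measure m (space Ainf), measure m {eps}, \<lambda>a. derivm a m)"

definition t_a :: "'x measure \<Rightarrow> ('x \<Rightarrow> ('a \<times> 'x + unit) measure) \<Rightarrow> 'a \<Rightarrow> 'x \<Rightarrow> 'x measure" where
  "t_a M \<alpha> a x = measure_of (space M) (sets M) (\<lambda>S. emeasure (\<alpha> x) (Inl ` ({a} \<times> S)))"

definition tau :: "'x measure \<Rightarrow> ('x \<Rightarrow> ('a \<times> 'x + unit) measure) \<Rightarrow> 'a \<Rightarrow> 'x measure \<Rightarrow> 'x measure" where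
  "tau M \<alpha> a m = measure_of (space M) (sets M)
     (\<lambda>S. \<integral>\<^sup>+ x. emeasure (\<alpha> x) (Inl ` ({a} \<times> S)) \<partial>m)"

definition alpha_sharp :: "'x measure \<Rightarrow> ('x \<Rightarrow> ('a \<times> 'x + unit) measure) \<Rightarrow> 'x measure
    \<Rightarrow> real \<times> real \<times> ('a \<Rightarrow> 'x measure)" where
  "alpha_sharp M \<alpha> m =
     ((\<integral>x. measure (\<alpha> x) (space (L M)) \<partial>m),
      (\<integral>x. measure (\<alpha> x) {Inr ()} \<partial>m),
      (\<lambda>a. tau M \<alpha> a m))"

definition is_coalg_morphism :: "'x measure \<Rightarrow> ('x \<Rightarrow> ('a \<times> 'x + unit) measure)
    \<Rightarrow> ('x measure \<Rightarrow> 'a word measure) \<Rightarrow> bool" where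
  "is_coalg_morphism M \<alpha> h \<longleftrightarrow>
     h \<in> measurable (subprob_algebra M) (subprob_algebra Ainf) \<and>
     (\<forall>m \<in> space (subprob_algebra M). Pi_coalg (h m) = Fmap h (alpha_sharp M \<alpha> m))"

end

theory Submission
  imports Defs
begin

text \<open>Call an event S of A^\<infinity> represented if sem m S = \<integral> tr(-)(S) dm for every
  sub-probability measure m on X. The first two components of the coalgebra-morphism equation,
  together with the first two hypotheses on tr, show that A^\<infinity> and {\<epsilon>} are represented. The third
  component says that S \<mapsto> sem m (aS) is sem (\<tau>_a m), and \<tau>_a m is the Kleisli extension
  m \<bind> t_a; so the recursive hypotheses on tr show that aS is represented whenever S is.
  Hence all cylinders wA^\<infinity> and all singletons {w} are represented. They form an \<inter>-stable
  generator of the \<sigma>-algebra of A^\<infinity>, and taking m = \<delta>_x gives sem \<delta>_x = tr x.\<close>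

lemma emeasure_measure_of_image:
  assumes "sigma_algebra \<Omega> A" and "inj f"
    and "\<And>S. S \<in> A \<Longrightarrow> f ` S \<in> sets N" and "S \<in> A"
  shows "emeasure (measure_of \<Omega> A (\<lambda>S. emeasure N (f ` S))) S = emeasure N (f ` S)"
proof (rule emeasure_measure_of_sigma[OF assms(1) _ _ assms(4)])
  show "positive A (\<lambda>S. emeasure N (f ` S))" by (simp add: positive_def)
  show "countably_additive A (\<lambda>S. emeasure N (f ` S))"
    unfolding countably_additive_def
  proof safe
    fix F :: "nat \<Rightarrow> _" assume F: "range F \<subseteq> A" "disjoint_family F"
    have "disjoint_family (\<lambda>i. f ` F i)"
      using F(2) unfolding disjoint_family_on_def by (simp add: image_Int[OF assms(2), symmetric])
    moreover have "range (\<lambda>i. f ` F i) \<subseteq> sets N" using F(1) assms(3) by auto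
    ultimately have "(\<Sum>i. emeasure N (f ` F i)) = emeasure N (\<Union>i. f ` F i)"
      by (rule suminf_emeasure[rotated])
    then show "(\<Sum>i. emeasure N (f ` F i)) = emeasure N (f ` \<Union>(range F))"
      by (simp add: image_UN)
  qed
qed

section \<open>Words\<close>

abbreviation Ainf_generator :: "'a word set set" where
  "Ainf_generator \<equiv> {{}} \<union> {{Inl w} | w. True} \<union> {cyl w | w. True}"

lemma sets_Ainf: "sets Ainf = sigma_sets UNIV Ainf_generator"
  unfolding Ainf_def by (rule sets_measure_of) auto

lemma space_Ainf[simp]: "space Ainf = UNIV"
  unfolding Ainf_def by (rule space_measure_of) auto

lemma cyl_in_sets_Ainf[measurable]: "cyl w \<in> sets Ainf"
  and singleton_in_sets_Ainf[measurable]: "{Inl w} \<in> sets Ainf"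
  unfolding sets_Ainf by auto

lemma inj_wcons: "inj (wcons a)"
proof (rule injI)
  fix u v assume eq: "wcons a u = wcons a v"
  show "u = v"
  proof (cases u; cases v)
    fix f g assume "u = Inr f" "v = Inr g"
    with eq have "case_nat a f = case_nat a g" by (simp add: wcons_def)
    then have "f i = g i" for i by (metis old.nat.simps(5))
    then show ?thesis using \<open>u = Inr f\<close> \<open>v = Inr g\<close> by auto
  qed (use eq in \<open>auto simp: wcons_def\<close>)
qed

lemma cyl_Nil: "cyl [] = UNIV"
proof (intro set_eqI iffI)
  fix x :: "'a word" show "x \<in> cyl []" unfolding cyl_def by (cases x) auto
qed simp

lemma wcons_image_cyl: "wcons a ` cyl w = cyl (a # w)"
proof
  show "wcons a ` cyl w \<subseteq> cyl (a # w)"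
    unfolding cyl_def wcons_def by (auto simp: map_upt_Suc simp del: upt_Suc)
  show "cyl (a # w) \<subseteq> wcons a ` cyl w"
  proof
    fix u assume u: "u \<in> cyl (a # w)"
    show "u \<in> wcons a ` cyl w"
    proof (cases u)
      case (Inl v)
      then obtain z where "v = a # w @ z" using u unfolding cyl_def by auto
      then have "u = wcons a (Inl (w @ z))" using Inl by (simp add: wcons_def)
      moreover have "Inl (w @ z) \<in> cyl w" unfolding cyl_def by auto
      ultimately show ?thesis by blast
    next
      case (Inr g)
      then have g: "map g [0..<Suc (length w)] = a # w" using u unfolding cyl_def by auto
      then have "g 0 = a" and tail: "map (\<lambda>i. g (Suc i)) [0..<length w] = w"
        by (simp_all add: map_upt_Suc del: upt_Suc)
      then have "u = wcons a (Inr (\<lambda>i. g (Suc i)))"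
        using Inr by (auto simp: wcons_def split: nat.split)
      moreover have "Inr (\<lambda>i. g (Suc i)) \<in> cyl w" using tail unfolding cyl_def by auto
      ultimately show ?thesis by blast
    qed
  qed
qed

lemma wcons_Inl[simp]: "wcons a (Inl w) = Inl (a # w)"
  by (simp add: wcons_def)

lemma wcons_image_in_sets_Ainf:
  assumes "S \<in> sets Ainf"
  shows "wcons a ` S \<in> sets Ainf"
proof -
  from assms have "S \<in> sigma_sets UNIV Ainf_generator" by (simp add: sets_Ainf)
  then show ?thesis
  proof induct
    case (Basic S)
    then show ?case by (auto simp: wcons_image_cyl)
  next
    case (Compl S)
    have "wcons a ` (UNIV - S) = cyl [a] - wcons a ` S"
      using inj_wcons[of a] wcons_image_cyl[of a "[]"]
      by (simp add: image_set_diff cyl_Nil)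
    then show ?case using Compl by auto
  qed (auto simp: image_UN)
qed

lemma cyl_Int_cyl:
  assumes "length v \<le> length w"
  shows "cyl v \<inter> cyl w = (if take (length v) w = v then cyl w else {})"
proof -
  have "u \<in> cyl v \<longleftrightarrow> take (length v) w = v" if u: "u \<in> cyl w" for u
  proof (cases u)
    case (Inl x)
    then obtain z where x: "x = w @ z" using u unfolding cyl_def by auto
    have "u \<in> cyl v \<longleftrightarrow> (\<exists>z'. x = v @ z')" using Inl unfolding cyl_def by auto
    also have "\<dots> \<longleftrightarrow> take (length v) x = v" by (metis append_eq_conv_conj)
    finally show ?thesis using assms x by simp
  next
    case (Inr f)
    then have "map f [0..<length w] = w" using u unfolding cyl_def by auto
    then have "take (length v) w = map f [0..<length v]"
      using assms by (metis add_0 take_map take_upt)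
    then show ?thesis using Inr unfolding cyl_def by auto
  qed
  then show ?thesis by auto
qed

lemma Int_stable_Ainf_generator: "Int_stable Ainf_generator"
proof (rule Int_stableI)
  have singleton: "{Inl u} \<inter> X \<in> Ainf_generator" "X \<inter> {Inl u} \<in> Ainf_generator"
    for u :: "'a list" and X
    by (cases "Inl u \<in> X"; auto)+
  have cyls: "cyl v \<inter> cyl w \<in> Ainf_generator" for v w :: "'a list"
  proof (cases "length v \<le> length w")
    case True then show ?thesis by (simp add: cyl_Int_cyl) blast
  next
    case False then show ?thesis using cyl_Int_cyl[of w v] by (simp add: Int_commute) blast
  qed
  fix X Y :: "'a word set" assume "X \<in> Ainf_generator" "Y \<in> Ainf_generator"
  then consider "X = {} \<or> Y = {}" | u where "X = {Inl u} \<or> Y = {Inl u}"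
    | v w where "X = cyl v" "Y = cyl w"
    by blast
  then show "X \<inter> Y \<in> Ainf_generator"
    by cases (use singleton cyls in auto)
qed

lemma emeasure_derivm:
  assumes "m \<in> space (subprob_algebra Ainf)" and "S \<in> sets Ainf"
  shows "emeasure (derivm a m) S = emeasure m (wcons a ` S)"
  unfolding derivm_def
  by (rule emeasure_measure_of_image[OF sets.sigma_algebra_axioms inj_wcons _ assms(2)])
     (use assms(1) in \<open>auto simp: space_subprob_algebra wcons_image_in_sets_Ainf\<close>)

lemma sets_L: "sets (L M :: ('a \<times> 'x + unit) measure) = sigma_sets (L_space M)
     {Inl ` S \<union> T | S T. S \<in> sets (count_space (UNIV :: 'a set) \<Otimes>\<^sub>M M) \<and> T \<subseteq> {Inr ()}}"
  unfolding L_def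
proof (rule sets_measure_of)
  have "S \<subseteq> UNIV \<times> space M" if "S \<in> sets (count_space (UNIV :: 'a set) \<Otimes>\<^sub>M M)" for S
    using sets.sets_into_space[OF that] by (simp add: space_pair_measure)
  then show "{Inl ` S \<union> T | S T. S \<in> sets (count_space (UNIV :: 'a set) \<Otimes>\<^sub>M M) \<and> T \<subseteq> {Inr ()}}
      \<subseteq> Pow (L_space M)"
    unfolding L_space_def by blast
qed

lemma Inl_in_sets_L:
  assumes "S \<in> sets M"
  shows "Inl ` ({a} \<times> S) \<in> sets (L M :: ('a \<times> 'x + unit) measure)"
proof -
  have "{a} \<times> S \<in> sets (count_space (UNIV :: 'a set) \<Otimes>\<^sub>M M)"
    using assms by (intro pair_measureI) auto
  then show ?thesis unfolding sets_L by (intro sigma_sets.Basic) blast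
qed

lemma Inr_in_sets_L: "{Inr ()} \<in> sets (L M :: ('a \<times> 'x + unit) measure)"
proof -
  have "{} \<in> sets (count_space (UNIV :: 'a set) \<Otimes>\<^sub>M M)" by simp
  then show ?thesis unfolding sets_L by (intro sigma_sets.Basic) blast
qed

section \<open>The transition kernels t_a\<close>

context
  fixes M :: "'x measure" and \<alpha> :: "'x \<Rightarrow> ('a \<times> 'x + unit) measure"
  assumes alpha_meas: "\<alpha> \<in> measurable M (prob_algebra (L M))"
begin

lemma prob_space_alpha: "x \<in> space M \<Longrightarrow> prob_space (\<alpha> x)"
  and sets_alpha: "x \<in> space M \<Longrightarrow> sets (\<alpha> x) = sets (L M)"
  using measurable_space[OF alpha_meas] by (auto simp: space_prob_algebra)

lemma measurable_emeasure_alpha: "X \<in> sets (L M) \<Longrightarrow> (\<lambda>x. emeasure (\<alpha> x) X) \<in> borel_measurable M"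
  using measurable_prob_algebraD[OF alpha_meas] by measurable

lemma nn_integral_emeasure_alpha:
  assumes "m \<in> space (subprob_algebra M)" and "X \<in> sets (L M)"
  shows "(\<integral>\<^sup>+x. emeasure (\<alpha> x) X \<partial>m) = ennreal (\<integral>x. measure (\<alpha> x) X \<partial>m)"
proof -
  interpret m: subprob_space m using assms(1) by (simp add: space_subprob_algebra)
  have sets_m: "sets m = sets M" using assms(1) by (simp add: space_subprob_algebra)
  have "AE x in m. norm (measure (\<alpha> x) X) \<le> 1"
    by (intro AE_I2)
       (simp add: sets_eq_imp_space_eq[OF sets_m] prob_space.prob_le_1 prob_space_alpha)
  moreover have "(\<lambda>x. measure (\<alpha> x) X) \<in> borel_measurable m"
    using measurable_prob_algebraD[OF alpha_meas] assms(2)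
    by (simp add: measurable_cong_sets[OF sets_m refl])
  ultimately have "integrable m (\<lambda>x. measure (\<alpha> x) X)" by (rule m.integrable_const_bound)
  then have "ennreal (\<integral>x. measure (\<alpha> x) X \<partial>m) = (\<integral>\<^sup>+x. ennreal (measure (\<alpha> x) X) \<partial>m)"
    by (rule nn_integral_eq_integral[symmetric]) simp
  also have "\<dots> = (\<integral>\<^sup>+x. emeasure (\<alpha> x) X \<partial>m)"
    by (intro nn_integral_cong)
       (simp add: sets_eq_imp_space_eq[OF sets_m] prob_space_alpha
          finite_measure.emeasure_eq_measure prob_space.finite_measure)
  finally show ?thesis ..
qed

lemma sets_t_a[simp]: "sets (t_a M \<alpha> a x) = sets M"
  unfolding t_a_def by (rule sets.sets_measure_of_eq)

lemma emeasure_t_a: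
  assumes "x \<in> space M" and "S \<in> sets M"
  shows "emeasure (t_a M \<alpha> a x) S = emeasure (\<alpha> x) (Inl ` ({a} \<times> S))"
proof -
  have img: "Inl ` ({a} \<times> S) = (\<lambda>y. Inl (a, y)) ` S" for S :: "'x set" by auto
  show ?thesis
    unfolding t_a_def img
    by (rule emeasure_measure_of_image[OF sets.sigma_algebra_axioms _ _ assms(2)])
       (use Inl_in_sets_L[of _ M a] in \<open>auto simp: inj_def assms(1) sets_alpha img\<close>)
qed

lemma measurable_t_a: "t_a M \<alpha> a \<in> measurable M (subprob_algebra M)"
proof (rule measurable_subprob_algebra)
  fix x assume x: "x \<in> space M"
  have space_t_a: "space (t_a M \<alpha> a x) = space M" by (rule sets_eq_imp_space_eq) simp
  have "emeasure (t_a M \<alpha> a x) (space M) \<le> 1"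
    using emeasure_t_a[OF x sets.top] prob_space.emeasure_le_1[OF prob_space_alpha[OF x]] by simp
  then show "subprob_space (t_a M \<alpha> a x)"
    using x by (intro subprob_spaceI) (auto simp: space_t_a)
next
  fix S assume S: "S \<in> sets M"
  have "(\<lambda>x. emeasure (\<alpha> x) (Inl ` ({a} \<times> S))) \<in> borel_measurable M"
    by (rule measurable_emeasure_alpha[OF Inl_in_sets_L[OF S]])
  then show "(\<lambda>x. emeasure (t_a M \<alpha> a x) S) \<in> borel_measurable M"
    by (rule measurable_cong[THEN iffD1, rotated]) (simp add: emeasure_t_a S)
qed simp

lemma tau_eq_bind:
  assumes m: "m \<in> space (subprob_algebra M)"
  shows "tau M \<alpha> a m = m \<bind> t_a M \<alpha> a"
proof -
  have sets_m: "sets m = sets M" using m by (simp add: space_subprob_algebra)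
  have "space m \<noteq> {}" using m by (simp add: space_subprob_algebra subprob_space.subprob_not_empty)
  then have sets_bind: "sets (m \<bind> t_a M \<alpha> a) = sets M" by (intro sets_bind) simp_all
  have kernel: "t_a M \<alpha> a \<in> measurable m (subprob_algebra M)"
    using measurable_t_a by (simp add: measurable_cong_sets[OF sets_m refl])
  have "tau M \<alpha> a m = measure_of (space M) (sets M) (emeasure (m \<bind> t_a M \<alpha> a))"
    unfolding tau_def
  proof (rule measure_of_eq[OF sets.space_closed])
    fix S assume "S \<in> sigma_sets (space M) (sets M)"
    then have S: "S \<in> sets M" by (simp add: sets.sigma_sets_eq)
    have "emeasure (m \<bind> t_a M \<alpha> a) S = (\<integral>\<^sup>+x. emeasure (t_a M \<alpha> a x) S \<partial>m)"
      by (rule emeasure_bind[OF \<open>space m \<noteq> {}\<close> kernel S])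
    also have "\<dots> = (\<integral>\<^sup>+ x. emeasure (\<alpha> x) (Inl ` ({a} \<times> S)) \<partial>m)"
      by (rule nn_integral_cong) (simp add: emeasure_t_a S sets_eq_imp_space_eq[OF sets_m])
    finally show "(\<integral>\<^sup>+ x. emeasure (\<alpha> x) (Inl ` ({a} \<times> S)) \<partial>m) = emeasure (m \<bind> t_a M \<alpha> a) S"
      by simp
  qed
  also have "\<dots> = m \<bind> t_a M \<alpha> a"
    using measure_of_of_measure[of "m \<bind> t_a M \<alpha> a"]
    by (simp add: sets_bind sets_eq_imp_space_eq[OF sets_bind])
  finally show ?thesis .
qed

lemma tau_in_space_subprob_algebra:
  assumes m: "m \<in> space (subprob_algebra M)"
  shows "tau M \<alpha> a m \<in> space (subprob_algebra M)"
proof -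
  have sets_m: "sets m = sets M" using m by (simp add: space_subprob_algebra)
  have "space m \<noteq> {}" using m by (simp add: space_subprob_algebra subprob_space.subprob_not_empty)
  then have "sets (m \<bind> t_a M \<alpha> a) = sets M" by (intro sets_bind) simp_all
  moreover have "subprob_space (m \<bind> t_a M \<alpha> a)"
    using m measurable_t_a
    by (intro subprob_space_bind)
       (auto simp: space_subprob_algebra measurable_cong_sets[OF sets_m refl])
  ultimately show ?thesis by (simp add: tau_eq_bind[OF m] space_subprob_algebra)
qed

end

section \<open>Represented events\<close>

definition represented_event ::
    "'x measure \<Rightarrow> ('x measure \<Rightarrow> 'a word measure) \<Rightarrow> ('x \<Rightarrow> 'a word measure) \<Rightarrow> 'a word set \<Rightarrow> bool"
  where "represented_event M sem tr S \<longleftrightarrow>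
     S \<in> sets Ainf \<and> (\<lambda>x. emeasure (tr x) S) \<in> borel_measurable M \<and>
     (\<forall>m \<in> space (subprob_algebra M). emeasure (sem m) S = (\<integral>\<^sup>+x. emeasure (tr x) S \<partial>m))"

context
  fixes M :: "'x measure" and \<alpha> :: "'x \<Rightarrow> ('a \<times> 'x + unit) measure"
    and sem :: "'x measure \<Rightarrow> 'a word measure"
  assumes alpha_meas: "\<alpha> \<in> measurable M (prob_algebra (L M))"
    and sem_morph: "is_coalg_morphism M \<alpha> sem"
begin

lemma sem_in_space_subprob_algebra:
  "m \<in> space (subprob_algebra M) \<Longrightarrow> sem m \<in> space (subprob_algebra Ainf)"
  using sem_morph unfolding is_coalg_morphism_def by (auto intro: measurable_space)

lemma
  assumes "m \<in> space (subprob_algebra M)"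
  shows measure_sem_space: "measure (sem m) (space Ainf) = (\<integral>x. measure (\<alpha> x) (space (L M)) \<partial>m)"
    and measure_sem_eps: "measure (sem m) {eps} = (\<integral>x. measure (\<alpha> x) {Inr ()} \<partial>m)"
    and derivm_sem: "derivm a (sem m) = sem (tau M \<alpha> a m)"
proof -
  have "Pi_coalg (sem m) = Fmap sem (alpha_sharp M \<alpha> m)"
    using sem_morph assms unfolding is_coalg_morphism_def by blast
  then show "measure (sem m) (space Ainf) = (\<integral>x. measure (\<alpha> x) (space (L M)) \<partial>m)"
    and "measure (sem m) {eps} = (\<integral>x. measure (\<alpha> x) {Inr ()} \<partial>m)"
    and "derivm a (sem m) = sem (tau M \<alpha> a m)"
    unfolding Pi_coalg_def Fmap_def alpha_sharp_def by (auto dest: fun_cong[of _ _ a])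
qed

lemma represented_eventI_alpha:
  assumes S: "S \<in> sets Ainf" and X: "X \<in> sets (L M)"
    and tr: "\<And>x. x \<in> space M \<Longrightarrow> emeasure (tr x) S = emeasure (\<alpha> x) X"
    and sem: "\<And>m. m \<in> space (subprob_algebra M) \<Longrightarrow> measure (sem m) S = (\<integral>x. measure (\<alpha> x) X \<partial>m)"
  shows "represented_event M sem tr S"
  unfolding represented_event_def
proof (intro conjI ballI S)
  show "(\<lambda>x. emeasure (tr x) S) \<in> borel_measurable M"
    using measurable_emeasure_alpha[OF alpha_meas X]
    by (rule measurable_cong[THEN iffD1, rotated]) (simp add: tr)
  fix m assume m: "m \<in> space (subprob_algebra M)"
  have space_m: "space m = space M"
    using m by (intro sets_eq_imp_space_eq) (simp add: space_subprob_algebra)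
  interpret subprob_space "sem m"
    using sem_in_space_subprob_algebra[OF m] by (simp add: space_subprob_algebra)
  have "emeasure (sem m) S = ennreal (\<integral>x. measure (\<alpha> x) X \<partial>m)"
    by (simp add: emeasure_eq_measure sem[OF m])
  also have "\<dots> = (\<integral>\<^sup>+x. emeasure (\<alpha> x) X \<partial>m)"
    by (rule nn_integral_emeasure_alpha[OF alpha_meas m X, symmetric])
  also have "\<dots> = (\<integral>\<^sup>+x. emeasure (tr x) S \<partial>m)"
    by (intro nn_integral_cong) (simp add: tr space_m)
  finally show "emeasure (sem m) S = (\<integral>\<^sup>+x. emeasure (tr x) S \<partial>m)" .
qed

lemma represented_event_wcons:
  assumes S: "represented_event M sem tr S"
    and tr: "\<And>x. x \<in> space M \<Longrightarrow>
      emeasure (tr x) (wcons a ` S) = (\<integral>\<^sup>+y. emeasure (tr y) S \<partial>t_a M \<alpha> a x)"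
  shows "represented_event M sem tr (wcons a ` S)"
  unfolding represented_event_def
proof (intro conjI ballI)
  have S_sets: "S \<in> sets Ainf" and S_meas: "(\<lambda>x. emeasure (tr x) S) \<in> borel_measurable M"
    and S_sem: "\<And>m. m \<in> space (subprob_algebra M) \<Longrightarrow>
      emeasure (sem m) S = (\<integral>\<^sup>+x. emeasure (tr x) S \<partial>m)"
    using S unfolding represented_event_def by auto
  show "wcons a ` S \<in> sets Ainf" by (rule wcons_image_in_sets_Ainf[OF S_sets])
  show "(\<lambda>x. emeasure (tr x) (wcons a ` S)) \<in> borel_measurable M"
    using measurable_compose[OF measurable_t_a[OF alpha_meas]
        nn_integral_measurable_subprob_algebra[OF S_meas]]
    by (rule measurable_cong[THEN iffD1, rotated]) (simp add: tr)
  fix m assume m: "m \<in> space (subprob_algebra M)"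
  have sets_m: "sets m = sets M" using m by (simp add: space_subprob_algebra)
  have "emeasure (sem m) (wcons a ` S) = emeasure (derivm a (sem m)) S"
    by (rule emeasure_derivm[OF sem_in_space_subprob_algebra[OF m] S_sets, symmetric])
  also have "\<dots> = (\<integral>\<^sup>+x. emeasure (tr x) S \<partial>tau M \<alpha> a m)"
    by (simp add: derivm_sem[OF m] S_sem tau_in_space_subprob_algebra[OF alpha_meas m])
  also have "\<dots> = (\<integral>\<^sup>+x. \<integral>\<^sup>+y. emeasure (tr y) S \<partial>t_a M \<alpha> a x \<partial>m)"
    unfolding tau_eq_bind[OF alpha_meas m]
    by (rule nn_integral_bind[OF S_meas])
       (simp add: measurable_t_a[OF alpha_meas] measurable_cong_sets[OF sets_m refl])
  also have "\<dots> = (\<integral>\<^sup>+x. emeasure (tr x) (wcons a ` S) \<partial>m)"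
    by (rule nn_integral_cong) (simp add: tr sets_eq_imp_space_eq[OF sets_m])
  finally show "emeasure (sem m) (wcons a ` S) = (\<integral>\<^sup>+x. emeasure (tr x) (wcons a ` S) \<partial>m)" .
qed

lemma represented_event_cyl_singleton:
  assumes tr_total: "\<And>x. x \<in> space M \<Longrightarrow> emeasure (tr x) (space Ainf) = emeasure (\<alpha> x) (space (L M))"
    and tr_eps: "\<And>x. x \<in> space M \<Longrightarrow> emeasure (tr x) {eps} = emeasure (\<alpha> x) {Inr ()}"
    and tr_cyl: "\<And>x a w. x \<in> space M \<Longrightarrow>
       emeasure (tr x) (cyl (a # w)) = (\<integral>\<^sup>+ y. emeasure (tr y) (cyl w) \<partial>(t_a M \<alpha> a x))"
    and tr_fin: "\<And>x a w. x \<in> space M \<Longrightarrow>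
       emeasure (tr x) {Inl (a # w)} = (\<integral>\<^sup>+ y. emeasure (tr y) {Inl w} \<partial>(t_a M \<alpha> a x))"
  shows "represented_event M sem tr (cyl w) \<and> represented_event M sem tr {Inl w}"
proof (induction w)
  case Nil
  have "represented_event M sem tr (space Ainf)"
    by (rule represented_eventI_alpha[OF sets.top sets.top tr_total measure_sem_space])
  moreover have "represented_event M sem tr {eps}"
    by (rule represented_eventI_alpha[OF _ Inr_in_sets_L tr_eps measure_sem_eps])
       (simp_all add: eps_def)
  ultimately show ?case by (simp add: cyl_Nil eps_def)
next
  case (Cons a w)
  then show ?case
    using represented_event_wcons[of tr "cyl w" a] represented_event_wcons[of tr "{Inl w}" a]
    by (simp add: wcons_image_cyl tr_cyl tr_fin)
qed

end

lemma emeasure_sem_return: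
  assumes "represented_event M sem tr S" and "x \<in> space M"
  shows "emeasure (sem (return M x)) S = emeasure (tr x) S"
proof -
  have "return M x \<in> space (subprob_algebra M)"
    using assms(2) by (simp add: space_subprob_algebra subprob_space_return)
  then have "emeasure (sem (return M x)) S = (\<integral>\<^sup>+y. emeasure (tr y) S \<partial>return M x)"
    using assms(1) unfolding represented_event_def by blast
  also have "\<dots> = emeasure (tr x) S"
    using assms unfolding represented_event_def by (intro nn_integral_return) auto
  finally show ?thesis .
qed

theorem mainTheorem13:
  fixes M :: "'x measure"
    and \<alpha> :: "'x \<Rightarrow> ('a::finite \<times> 'x + unit) measure"
    and sem :: "'x measure \<Rightarrow> 'a word measure"
    and tr :: "'x \<Rightarrow> 'a word measure"
  assumes alpha_meas: "\<alpha> \<in> measurable M (prob_algebra (L M))"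
    and sem_morph: "is_coalg_morphism M \<alpha> sem"
    and tr_prob: "\<And>x. x \<in> space M \<Longrightarrow> tr x \<in> space (prob_algebra Ainf)"
    and tr_total: "\<And>x. x \<in> space M \<Longrightarrow> emeasure (tr x) (space Ainf) = emeasure (\<alpha> x) (space (L M))"
    and tr_eps: "\<And>x. x \<in> space M \<Longrightarrow> emeasure (tr x) {eps} = emeasure (\<alpha> x) {Inr ()}"
    and tr_cyl: "\<And>x a w. x \<in> space M \<Longrightarrow>
       emeasure (tr x) (cyl (a # w)) = (\<integral>\<^sup>+ y. emeasure (tr y) (cyl w) \<partial>(t_a M \<alpha> a x))"
    and tr_fin: "\<And>x a w. x \<in> space M \<Longrightarrow>
       emeasure (tr x) {Inl (a # w)} = (\<integral>\<^sup>+ y. emeasure (tr y) {Inl w} \<partial>(t_a M \<alpha> a x))"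
  shows "\<forall>x \<in> space M. sem (return M x) = tr x"
proof
  fix x assume x: "x \<in> space M"
  note represented =
    represented_event_cyl_singleton[OF alpha_meas sem_morph tr_total tr_eps tr_cyl tr_fin]
  have sem_x: "sem (return M x) \<in> space (subprob_algebra Ainf)"
    using x by (intro sem_in_space_subprob_algebra[OF alpha_meas sem_morph])
      (simp add: space_subprob_algebra subprob_space_return)
  show "sem (return M x) = tr x"
  proof (rule measure_eqI_generator_eq[OF Int_stable_Ainf_generator,
        where \<Omega>=UNIV and A="\<lambda>_. cyl []"])
    fix S :: "'a word set" assume "S \<in> Ainf_generator"
    then show "emeasure (sem (return M x)) S = emeasure (tr x) S"
      using emeasure_sem_return[OF _ x] represented by auto
  next
    show "sets (sem (return M x)) = sigma_sets UNIV Ainf_generator"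
      using sem_x by (simp add: space_subprob_algebra sets_Ainf)
    show "sets (tr x) = sigma_sets UNIV Ainf_generator"
      using tr_prob[OF x] by (simp add: space_prob_algebra sets_Ainf)
    show "emeasure (sem (return M x)) (cyl []) \<noteq> \<infinity>"
      using sem_x by (simp add: space_subprob_algebra subprob_space.emeasure_subprob_space_less_top)
    show "range (\<lambda>_. cyl []) \<subseteq> Ainf_generator" by blast
  qed (auto simp: cyl_Nil)
qed

end
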